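(* In the central objective estimation setting described in the context, for every $t$, \[ \mathbb{E}\|g^{0,b}_t(\theta^c_t)\|^2\le2\,\mathbb{E}\|\Delta\theta^c_t\|^2+2\sigma^2n^{-1}. \]
   Context: $n$ agents with environment distributions $\mu^i$ on $\mathcal{S}$, $\mu^0=\frac1n\sum_i\mu^i$; shared $\Phi:\mathcal{S}\to\mathbb{R}^{d\times d}$ with $\|\Phi(s)\|\le1$, $\bar\Phi^0=\mathbb{E}_{\mu^0}\Phi(s)$ with $\frac12(\bar\Phi^0+(\bar\Phi^0)^T)\succ0$; objectives $b^i(s)=\Phi(s)\theta^i_*$; $\bar b^0=\frac1n\sum_i\mathbb{E}_{\mu^i}b^i(s)$; $\theta^c_*$ solves $\bar\Phi^0\theta^c_*=\bar b^0$. Constants: $G_b=\max\{\max_i\|\theta^i_*\|,\|\theta^c_*\|\}$, $G_A\ge\sup_s\|A(s)\|$ for a shared feature map $A$, $G_x\ge0$, and $\sigma=2\max\{G_AG_x,G_b\}$ (so in particular $\sigma\ge2G_b$). Iteration: at each step each agent $i$ draws $s^i_t\sim\mu^i$ independently of everything else, $g^{0,b}_t(\theta)=\frac1n\sum_{i=1}^n(\Phi(s^i_t)\theta-b^i(s^i_t))$, $\theta^c_{t+1}=\theta^c_t-\alpha^b_tg^{0,b}_t(\theta^c_t)$ with deterministic step sizes and arbitrary $\theta^c_0$; $\Delta\theta^c_t=\theta^c_t-\theta^c_*$. *)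

theory Defs
  imports "HOL-Analysis.Analysis" "HOL-Probability.Probability"
begin

definition posdef_mat :: "real^'d^'d \<Rightarrow> bool" where
  "posdef_mat P \<longleftrightarrow> (\<forall>x. x \<noteq> 0 \<longrightarrow> 0 < x \<bullet> (P *v x))"

text \<open>Averaged stochastic semi-gradient
  g^{0,b}(theta) = (1/n) sum_i (Phi(s_i) theta - b^i(s_i)),  b^i(s) = Phi(s) theta^i_*.\<close>
definition g0b :: "nat \<Rightarrow> ('s \<Rightarrow> real^'d^'d) \<Rightarrow> (nat \<Rightarrow> real^'d) \<Rightarrow> (nat \<Rightarrow> 's)
    \<Rightarrow> real^'d \<Rightarrow> real^'d" where
  "g0b n \<Phi> \<theta>s smp \<theta> =
     inverse (real n) *\<^sub>R (\<Sum>i<n. \<Phi> (smp i) *v \<theta> - \<Phi> (smp i) *v \<theta>s i)"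

end

theory Submission
  imports Defs
begin

(* Write g theta for the averaged semi-gradient at the samples of step t. Every Phi s has
   operator norm at most 1, so g is 1-Lipschitz and pointwise
   norm (g theta_t) <= norm (theta_t - theta_cs) + norm (g theta_cs); squaring gives the first
   term of the bound, without any independence between theta_t and the fresh samples.
   The vector g theta_cs is the mean of the n independent vectors Phi (s_i) (theta_cs - theta_s i),
   each of norm at most 2 G_b <= sigma, and it is centred by the defining equation of theta_cs.
   For independent vectors the cross terms of E ||sum Y_i||^2 factor into products of means,
   so E ||sum Y_i||^2 <= sum E ||Y_i||^2 <= n sigma^2, i.e. E ||g theta_cs||^2 <= sigma^2 / n.
   The iterates are bounded by induction, which makes every integral involved a genuine one. *)

section \<open>Matrices acting on vectors\<close>

lemma bounded_linear_matrix_vector_mult_left: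
  "bounded_linear (\<lambda>A::real^'n^'m. A *v x)"
proof -
  have "linear (\<lambda>A::real^'n^'m. A *v x)"
    by (intro linearI) (simp_all add: matrix_vector_mult_add_rdistrib scaleR_matrix_vector_assoc)
  then show ?thesis by (simp add: linear_conv_bounded_linear)
qed

lemma sum_matrix_vector_mult:
  fixes A :: "'i \<Rightarrow> real^'n^'m"
  shows "(\<Sum>i\<in>I. A i) *v x = (\<Sum>i\<in>I. A i *v x)"
  by (induction I rule: infinite_finite_induct) (simp_all add: matrix_vector_mult_add_rdistrib)

lemma borel_measurable_matrix_vector_mult [measurable]:
  fixes F :: "'a \<Rightarrow> real^'n^'m"
  assumes "F \<in> borel_measurable M" "v \<in> borel_measurable M"
  shows "(\<lambda>\<omega>. F \<omega> *v v \<omega>) \<in> borel_measurable M"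
proof (rule borel_measurable_continuous_Pair[OF assms, where H="(*v)"])
  show "continuous_on UNIV (\<lambda>p::(real^'n^'m) \<times> (real^'n). fst p *v snd p)"
    unfolding matrix_vector_mult_def by (intro continuous_on_vec_lambda continuous_intros)
qed

lemma norm_matrix_le_onorm:
  fixes A :: "real^'n^'m"
  shows "norm A \<le> real CARD('m) * real CARD('n) * onorm ((*v) A)"
proof -
  have "norm A \<le> (\<Sum>r\<in>UNIV. norm (A $ r))"
    unfolding norm_vec_def by (rule L2_set_le_sum) simp
  also have "\<dots> \<le> (\<Sum>r\<in>UNIV. \<Sum>c\<in>UNIV. \<bar>A $ r $ c\<bar>)"
    by (intro sum_mono norm_le_l1_cart)
  also have "\<dots> \<le> (\<Sum>r\<in>(UNIV::'m set). \<Sum>c\<in>(UNIV::'n set). onorm ((*v) A))"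
    by (intro sum_mono matrix_component_le_onorm)
  finally show ?thesis by simp
qed

lemma norm_matrix_vector_mult_le:
  fixes A :: "real^'n^'m"
  assumes "onorm ((*v) A) \<le> 1"
  shows "norm (A *v x) \<le> norm x"
proof -
  have "norm (A *v x) \<le> onorm ((*v) A) * norm x"
    by (rule onorm[OF matrix_vector_mul_bounded_linear])
  also have "\<dots> \<le> norm x"
    using mult_right_mono[OF assms norm_ge_zero] by simp
  finally show ?thesis .
qed

lemma (in finite_measure) integrable_matrix_onorm_bounded:
  fixes F :: "'a \<Rightarrow> real^'n^'m"
  assumes "F \<in> borel_measurable M" and "\<And>x. x \<in> space M \<Longrightarrow> onorm ((*v) (F x)) \<le> B"
  shows "integrable M F"
proof (rule integrable_const_bound[OF AE_I2])
  fix x assume "x \<in> space M"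
  have "norm (F x) \<le> real CARD('m) * real CARD('n) * onorm ((*v) (F x))"
    by (rule norm_matrix_le_onorm)
  also have "\<dots> \<le> real CARD('m) * real CARD('n) * B"
    using assms(2)[OF \<open>x \<in> space M\<close>] by (intro mult_left_mono) simp_all
  finally show "norm (F x) \<le> real CARD('m) * real CARD('n) * B" .
qed (rule assms(1))

section \<open>Second moments of sums of independent random vectors\<close>

lemma (in finite_measure) integrable_power2_norm_bounded:
  fixes f :: "'a \<Rightarrow> 'b::{banach, second_countable_topology}"
  assumes "f \<in> borel_measurable M" and "\<And>x. x \<in> space M \<Longrightarrow> norm (f x) \<le> B"
  shows "integrable M (\<lambda>x. (norm (f x))\<^sup>2)"
proof (rule integrable_const_bound[OF AE_I2])
  fix x assume "x \<in> space M"
  then show "norm ((norm (f x))\<^sup>2) \<le> B\<^sup>2"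
    using assms(2) by (simp add: power_mono)
qed (use assms(1) in measurable)

lemma (in prob_space) indep_sets_reindex:
  assumes indep: "indep_sets F (f ` I)" and inj: "inj_on f I"
  shows "indep_sets (\<lambda>i. F (f i)) I"
proof (rule indep_setsI)
  show "F (f i) \<subseteq> events" if "i \<in> I" for i
    using indep that by (auto simp: indep_sets_def)
next
  fix A J assume J: "J \<noteq> {}" "J \<subseteq> I" "finite J" and A: "\<forall>j\<in>J. A j \<in> F (f j)"
  define B where "B = A \<circ> the_inv_into J f"
  have inj_J: "inj_on f J" using inj J(2) by (rule inj_on_subset)
  have B: "B (f j) = A j" if "j \<in> J" for j
    using the_inv_into_f_f[OF inj_J that] by (simp add: B_def)
  have "prob (\<Inter>k\<in>f ` J. B k) = (\<Prod>k\<in>f ` J. prob (B k))"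
    by (rule indep_setsD[OF indep]) (use J A B in auto)
  then show "prob (\<Inter>j\<in>J. A j) = (\<Prod>j\<in>J. prob (A j))"
    by (simp add: prod.reindex[OF inj_J] B)
qed

lemma (in prob_space) indep_vars_reindex:
  assumes "indep_vars M' X (f ` I)" and "inj_on f I"
  shows "indep_vars (\<lambda>i. M' (f i)) (\<lambda>i. X (f i)) I"
  using assms indep_sets_reindex[of "\<lambda>i. {X i -` A \<inter> space M | A. A \<in> sets (M' i)}" f I]
  unfolding indep_vars_def2 by auto

lemma (in prob_space) indep_vars_integral_inner:
  fixes X :: "'i \<Rightarrow> 'a \<Rightarrow> 'b::euclidean_space"
  assumes indep: "indep_vars (\<lambda>_. borel) X I" and ij: "i \<in> I" "j \<in> I" "i \<noteq> j"
    and int: "integrable M (X i)" "integrable M (X j)"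
  shows "integrable M (\<lambda>\<omega>. X i \<omega> \<bullet> X j \<omega>)"
    and "(\<integral>\<omega>. X i \<omega> \<bullet> X j \<omega> \<partial>M) = (\<integral>\<omega>. X i \<omega> \<partial>M) \<bullet> (\<integral>\<omega>. X j \<omega> \<partial>M)"
proof -
  have int_b: "integrable M (\<lambda>\<omega>. (X i \<omega> \<bullet> b) * (X j \<omega> \<bullet> b))"
    and eq_b: "(\<integral>\<omega>. (X i \<omega> \<bullet> b) * (X j \<omega> \<bullet> b) \<partial>M)
                 = ((\<integral>\<omega>. X i \<omega> \<partial>M) \<bullet> b) * ((\<integral>\<omega>. X j \<omega> \<partial>M) \<bullet> b)" for b
  proof -
    let ?Xb = "\<lambda>k \<omega>. X k \<omega> \<bullet> b"
    have indep_b: "indep_vars (\<lambda>_. borel) ?Xb {i, j}"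
      by (rule indep_vars_subset[OF indep_vars_compose2[OF indep]]) (use ij in auto)
    have int_k: "integrable M (?Xb k)" if "k \<in> {i, j}" for k
      using that int by auto
    show "integrable M (\<lambda>\<omega>. (X i \<omega> \<bullet> b) * (X j \<omega> \<bullet> b))"
      using indep_vars_integrable[OF _ indep_b int_k] ij(3) by simp
    show "(\<integral>\<omega>. (X i \<omega> \<bullet> b) * (X j \<omega> \<bullet> b) \<partial>M)
                 = ((\<integral>\<omega>. X i \<omega> \<partial>M) \<bullet> b) * ((\<integral>\<omega>. X j \<omega> \<partial>M) \<bullet> b)"
      using indep_vars_lebesgue_integral[OF _ indep_b int_k] ij(3) int by simp
  qed
  show "integrable M (\<lambda>\<omega>. X i \<omega> \<bullet> X j \<omega>)"
    by (subst euclidean_inner) (simp add: int_b)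
  show "(\<integral>\<omega>. X i \<omega> \<bullet> X j \<omega> \<partial>M) = (\<integral>\<omega>. X i \<omega> \<partial>M) \<bullet> (\<integral>\<omega>. X j \<omega> \<partial>M)"
    by (subst (1 2) euclidean_inner) (simp add: int_b eq_b)
qed

lemma (in prob_space) integral_norm_sum_indep_vars_squared:
  fixes X :: "'i \<Rightarrow> 'a \<Rightarrow> 'b::euclidean_space"
  assumes "finite I" and indep: "indep_vars (\<lambda>_. borel) X I"
    and int: "\<And>i. i \<in> I \<Longrightarrow> integrable M (X i)"
    and int_sq: "\<And>i. i \<in> I \<Longrightarrow> integrable M (\<lambda>\<omega>. (norm (X i \<omega>))\<^sup>2)"
  shows "(\<integral>\<omega>. (norm (\<Sum>i\<in>I. X i \<omega>))\<^sup>2 \<partial>M)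
           = (norm (\<Sum>i\<in>I. \<integral>\<omega>. X i \<omega> \<partial>M))\<^sup>2
             + (\<Sum>i\<in>I. (\<integral>\<omega>. (norm (X i \<omega>))\<^sup>2 \<partial>M) - (norm (\<integral>\<omega>. X i \<omega> \<partial>M))\<^sup>2)"
proof -
  define m where "m i = (\<integral>\<omega>. X i \<omega> \<partial>M)" for i
  define v where "v i = (\<integral>\<omega>. (norm (X i \<omega>))\<^sup>2 \<partial>M) - (norm (m i))\<^sup>2" for i
  have int_inner: "integrable M (\<lambda>\<omega>. X i \<omega> \<bullet> X j \<omega>)" if "i \<in> I" "j \<in> I" for i j
    using int_sq[OF that(1)] indep_vars_integral_inner(1)[OF indep that _ int[OF that(1)] int[OF that(2)]]
    by (cases "i = j") (simp_all add: power2_norm_eq_inner)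
  have integral_inner:
    "(\<integral>\<omega>. X i \<omega> \<bullet> X j \<omega> \<partial>M) = m i \<bullet> m j + (if i = j then v i else 0)"
    if "i \<in> I" "j \<in> I" for i j
    using indep_vars_integral_inner(2)[OF indep that _ int[OF that(1)] int[OF that(2)]]
    by (cases "i = j") (simp_all add: m_def v_def power2_norm_eq_inner)
  have "(\<integral>\<omega>. (norm (\<Sum>i\<in>I. X i \<omega>))\<^sup>2 \<partial>M) = (\<integral>\<omega>. (\<Sum>i\<in>I. \<Sum>j\<in>I. X i \<omega> \<bullet> X j \<omega>) \<partial>M)"
    by (simp only: power2_norm_eq_inner inner_sum_left) (simp only: inner_sum_right)
  also have "\<dots> = (\<Sum>i\<in>I. \<Sum>j\<in>I. \<integral>\<omega>. X i \<omega> \<bullet> X j \<omega> \<partial>M)"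
    using int_inner by (simp add: Bochner_Integration.integral_sum Bochner_Integration.integrable_sum)
  also have "\<dots> = (\<Sum>i\<in>I. \<Sum>j\<in>I. m i \<bullet> m j) + (\<Sum>i\<in>I. v i)"
    using \<open>finite I\<close> by (simp add: integral_inner sum.distrib)
  also have "(\<Sum>i\<in>I. \<Sum>j\<in>I. m i \<bullet> m j) = (norm (\<Sum>i\<in>I. m i))\<^sup>2"
    by (simp only: power2_norm_eq_inner inner_sum_left) (simp only: inner_sum_right)
  finally show ?thesis by (simp add: m_def v_def)
qed

lemma (in prob_space) integral_norm_sum_indep_vars_squared_le:
  fixes X :: "'i \<Rightarrow> 'a \<Rightarrow> 'b::euclidean_space"
  assumes "finite I" and indep: "indep_vars (\<lambda>_. borel) X I"
    and bound: "\<And>i \<omega>. i \<in> I \<Longrightarrow> \<omega> \<in> space M \<Longrightarrow> norm (X i \<omega>) \<le> c"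
    and centred: "(\<Sum>i\<in>I. \<integral>\<omega>. X i \<omega> \<partial>M) = 0"
  shows "(\<integral>\<omega>. (norm (\<Sum>i\<in>I. X i \<omega>))\<^sup>2 \<partial>M) \<le> real (card I) * c\<^sup>2"
proof -
  have meas: "X i \<in> borel_measurable M" if "i \<in> I" for i
    using indep that by (auto simp: indep_vars_def2)
  have sq_bound: "(norm (X i \<omega>))\<^sup>2 \<le> c\<^sup>2" if "i \<in> I" "\<omega> \<in> space M" for i \<omega>
    using bound[OF that] by (simp add: power_mono)
  have int: "integrable M (X i)" if "i \<in> I" for i
    using bound that by (intro integrable_const_bound[OF _ meas]) auto
  have int_sq: "integrable M (\<lambda>\<omega>. (norm (X i \<omega>))\<^sup>2)" if "i \<in> I" for i
    using bound that by (intro integrable_power2_norm_bounded[OF meas]) auto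
  have "(\<integral>\<omega>. (norm (X i \<omega>))\<^sup>2 \<partial>M) \<le> c\<^sup>2" if "i \<in> I" for i
    using integral_mono[OF int_sq[OF that] integrable_const[of "c\<^sup>2"]] sq_bound[OF that] prob_space
    by simp
  then have "(\<Sum>i\<in>I. (\<integral>\<omega>. (norm (X i \<omega>))\<^sup>2 \<partial>M) - (norm (\<integral>\<omega>. X i \<omega> \<partial>M))\<^sup>2)
               \<le> (\<Sum>i\<in>I. c\<^sup>2)"
    by (intro sum_mono) (smt (verit) zero_le_power2)
  then show ?thesis
    using integral_norm_sum_indep_vars_squared[OF \<open>finite I\<close> indep int int_sq] centred by simp
qed

section \<open>The averaged semi-gradient\<close>

lemma norm_mean_le:
  fixes f :: "nat \<Rightarrow> 'a::real_normed_vector"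
  assumes "0 < n" and "\<And>i. i < n \<Longrightarrow> norm (f i) \<le> c"
  shows "norm (inverse (real n) *\<^sub>R (\<Sum>i<n. f i)) \<le> c"
proof -
  have "norm (\<Sum>i<n. f i) \<le> real n * c"
    using sum_norm_le[of "{..<n}" f "\<lambda>_. c"] assms(2) by simp
  then show ?thesis
    using assms(1) by (simp add: field_simps)
qed

lemma g0b_eq: "g0b n \<Phi> \<theta>s s \<theta> = inverse (real n) *\<^sub>R (\<Sum>i<n. \<Phi> (s i) *v (\<theta> - \<theta>s i))"
  by (simp add: g0b_def matrix_vector_mult_diff_distrib)

lemma g0b_diff:
  "g0b n \<Phi> \<theta>s s \<theta> - g0b n \<Phi> \<theta>s s \<theta>' = inverse (real n) *\<^sub>R (\<Sum>i<n. \<Phi> (s i) *v (\<theta> - \<theta>'))"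
  by (simp add: g0b_eq matrix_vector_mult_diff_distrib sum_subtractf scaleR_diff_right)

lemma norm_g0b_le:
  assumes "0 < n" and "\<And>i. i < n \<Longrightarrow> onorm ((*v) (\<Phi> (s i))) \<le> 1"
    and "\<And>i. i < n \<Longrightarrow> norm (\<theta> - \<theta>s i) \<le> c"
  shows "norm (g0b n \<Phi> \<theta>s s \<theta>) \<le> c"
  unfolding g0b_eq using assms norm_matrix_vector_mult_le order_trans
  by (intro norm_mean_le) blast+

lemma norm_g0b_diff_le:
  assumes "0 < n" and "\<And>i. i < n \<Longrightarrow> onorm ((*v) (\<Phi> (s i))) \<le> 1"
  shows "norm (g0b n \<Phi> \<theta>s s \<theta> - g0b n \<Phi> \<theta>s s \<theta>') \<le> norm (\<theta> - \<theta>')"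
  unfolding g0b_diff using assms norm_matrix_vector_mult_le
  by (intro norm_mean_le) blast+

lemma borel_measurable_g0b:
  assumes "\<And>i. i < n \<Longrightarrow> (\<lambda>\<omega>. \<Phi> (s i \<omega>)) \<in> borel_measurable M" and "\<theta> \<in> borel_measurable M"
  shows "(\<lambda>\<omega>. g0b n \<Phi> \<theta>s (\<lambda>i. s i \<omega>) (\<theta> \<omega>)) \<in> borel_measurable M"
  unfolding g0b_def using assms by measurable

lemma g0b_iterates_measurable:
  assumes "\<And>t i. i < n \<Longrightarrow> (\<lambda>\<omega>. \<Phi> (smp t i \<omega>)) \<in> borel_measurable M"
    and "\<And>\<omega>. \<theta>c 0 \<omega> = \<theta>0"
    and "\<And>t \<omega>. \<theta>c (Suc t) \<omega> = \<theta>c t \<omega> - \<alpha> t *\<^sub>R g0b n \<Phi> \<theta>s (\<lambda>i. smp t i \<omega>) (\<theta>c t \<omega>)"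
  shows "\<theta>c t \<in> borel_measurable M"
proof (induction t)
  case 0
  then show ?case using assms(2) by simp
next
  case (Suc t)
  have "(\<lambda>\<omega>. g0b n \<Phi> \<theta>s (\<lambda>i. smp t i \<omega>) (\<theta>c t \<omega>)) \<in> borel_measurable M"
    by (rule borel_measurable_g0b[where s = "smp t"]) (use assms(1) Suc in auto)
  moreover have "\<theta>c (Suc t) = (\<lambda>\<omega>. \<theta>c t \<omega> - \<alpha> t *\<^sub>R g0b n \<Phi> \<theta>s (\<lambda>i. smp t i \<omega>) (\<theta>c t \<omega>))"
    using assms(3) by blast
  ultimately show ?case
    using Suc by simp
qed

lemma g0b_iterates_bounded:
  assumes "0 < n" and "\<And>t i \<omega>. i < n \<Longrightarrow> \<omega> \<in> \<Omega> \<Longrightarrow> onorm ((*v) (\<Phi> (smp t i \<omega>))) \<le> 1"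
    and "\<And>\<omega>. \<theta>c 0 \<omega> = \<theta>0"
    and "\<And>t \<omega>. \<theta>c (Suc t) \<omega> = \<theta>c t \<omega> - \<alpha> t *\<^sub>R g0b n \<Phi> \<theta>s (\<lambda>i. smp t i \<omega>) (\<theta>c t \<omega>)"
  shows "\<exists>B. \<forall>\<omega>\<in>\<Omega>. norm (\<theta>c t \<omega>) \<le> B"
proof (induction t)
  case 0
  then show ?case using assms(3) by auto
next
  case (Suc t)
  then obtain B where B: "\<And>\<omega>. \<omega> \<in> \<Omega> \<Longrightarrow> norm (\<theta>c t \<omega>) \<le> B" by blast
  define G where "G = (\<Sum>i<n. norm (\<theta>s i))"
  have "norm (\<theta>c (Suc t) \<omega>) \<le> B + \<bar>\<alpha> t\<bar> * (B + G)" if "\<omega> \<in> \<Omega>" for \<omega>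
  proof -
    have "norm (\<theta>c t \<omega> - \<theta>s i) \<le> B + G" if "i < n" for i
      using norm_triangle_ineq4[of "\<theta>c t \<omega>" "\<theta>s i"] B[OF \<open>\<omega> \<in> \<Omega>\<close>]
        member_le_sum[of i "{..<n}" "\<lambda>i. norm (\<theta>s i)"] that
      by (simp add: G_def)
    then have "norm (g0b n \<Phi> \<theta>s (\<lambda>i. smp t i \<omega>) (\<theta>c t \<omega>)) \<le> B + G"
      using assms(1,2) that by (intro norm_g0b_le) auto
    then have "norm (\<alpha> t *\<^sub>R g0b n \<Phi> \<theta>s (\<lambda>i. smp t i \<omega>) (\<theta>c t \<omega>)) \<le> \<bar>\<alpha> t\<bar> * (B + G)"
      by (simp add: mult_left_mono)
    then show ?thesis
      unfolding assms(4) using norm_triangle_ineq4 B[OF that] by (smt (verit))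
  qed
  then show ?case by blast
qed

lemma (in prob_space) integral_norm_g0b_iterate_le:
  assumes "0 < n"
    and \<Phi>_measurable: "\<And>t i. i < n \<Longrightarrow> (\<lambda>\<omega>. \<Phi> (smp t i \<omega>)) \<in> borel_measurable M"
    and \<Phi>_onorm: "\<And>t i \<omega>. i < n \<Longrightarrow> \<omega> \<in> space M \<Longrightarrow> onorm ((*v) (\<Phi> (smp t i \<omega>))) \<le> 1"
    and iter0: "\<And>\<omega>. \<theta>c 0 \<omega> = \<theta>0"
    and iterSuc: "\<And>t \<omega>. \<theta>c (Suc t) \<omega> = \<theta>c t \<omega> - \<alpha> t *\<^sub>R g0b n \<Phi> \<theta>s (\<lambda>i. smp t i \<omega>) (\<theta>c t \<omega>)"
  shows "(\<integral>\<omega>. (norm (g0b n \<Phi> \<theta>s (\<lambda>i. smp t i \<omega>) (\<theta>c t \<omega>)))\<^sup>2 \<partial>M)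
           \<le> 2 * (\<integral>\<omega>. (norm (\<theta>c t \<omega> - \<theta>'))\<^sup>2 \<partial>M)
             + 2 * (\<integral>\<omega>. (norm (g0b n \<Phi> \<theta>s (\<lambda>i. smp t i \<omega>) \<theta>'))\<^sup>2 \<partial>M)"
proof -
  let ?g = "\<lambda>\<theta> \<omega>. g0b n \<Phi> \<theta>s (\<lambda>i. smp t i \<omega>) \<theta>"
  have \<theta>c_measurable: "\<theta>c t \<in> borel_measurable M"
    using \<Phi>_measurable iter0 iterSuc by (rule g0b_iterates_measurable)
  have "\<exists>B. \<forall>\<omega>\<in>space M. norm (\<theta>c t \<omega>) \<le> B"
    using \<open>0 < n\<close> \<Phi>_onorm iter0 iterSuc by (rule g0b_iterates_bounded)
  then obtain B where B: "\<forall>\<omega>\<in>space M. norm (\<theta>c t \<omega>) \<le> B" by blast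
  have int_dist: "integrable M (\<lambda>\<omega>. (norm (\<theta>c t \<omega> - \<theta>'))\<^sup>2)"
  proof (rule integrable_power2_norm_bounded)
    show "(\<lambda>\<omega>. \<theta>c t \<omega> - \<theta>') \<in> borel_measurable M"
      using \<theta>c_measurable by measurable
    show "norm (\<theta>c t \<omega> - \<theta>') \<le> B + norm \<theta>'" if "\<omega> \<in> space M" for \<omega>
      using bspec[OF B that] norm_triangle_ineq4[of "\<theta>c t \<omega>" \<theta>'] by linarith
  qed
  have int_noise: "integrable M (\<lambda>\<omega>. (norm (?g \<theta>' \<omega>))\<^sup>2)"
    using \<open>0 < n\<close> \<Phi>_onorm member_le_sum[of _ "{..<n}" "\<lambda>i. norm (\<theta>' - \<theta>s i)"]
    by (intro integrable_power2_norm_bounded[where B="\<Sum>i<n. norm (\<theta>' - \<theta>s i)"]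
        borel_measurable_g0b \<Phi>_measurable norm_g0b_le) auto
  have "(norm (?g (\<theta>c t \<omega>) \<omega>))\<^sup>2 \<le> 2 * (norm (\<theta>c t \<omega> - \<theta>'))\<^sup>2 + 2 * (norm (?g \<theta>' \<omega>))\<^sup>2"
    if "\<omega> \<in> space M" for \<omega>
  proof -
    have "norm (?g (\<theta>c t \<omega>) \<omega> - ?g \<theta>' \<omega>) \<le> norm (\<theta>c t \<omega> - \<theta>')"
      using \<Phi>_onorm that by (intro norm_g0b_diff_le[OF \<open>0 < n\<close>])
    then have "norm (?g (\<theta>c t \<omega>) \<omega>) \<le> norm (\<theta>c t \<omega> - \<theta>') + norm (?g \<theta>' \<omega>)"
      using norm_triangle_ineq2[of "?g (\<theta>c t \<omega>) \<omega>" "?g \<theta>' \<omega>"] by linarith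
    then show ?thesis
      by (smt (verit) norm_ge_zero power_mono sum_squares_bound power2_sum)
  qed
  then have "(\<integral>\<omega>. (norm (?g (\<theta>c t \<omega>) \<omega>))\<^sup>2 \<partial>M)
               \<le> (\<integral>\<omega>. 2 * (norm (\<theta>c t \<omega> - \<theta>'))\<^sup>2 + 2 * (norm (?g \<theta>' \<omega>))\<^sup>2 \<partial>M)"
    using int_dist int_noise by (intro integral_mono') auto
  then show ?thesis
    using int_dist int_noise by simp
qed

lemma (in prob_space) integral_g0b:
  assumes s_measurable: "\<And>i. i < n \<Longrightarrow> s i \<in> measurable M S"
    and distr: "\<And>i. i < n \<Longrightarrow> distr M S (s i) = \<mu> i"
    and \<Phi>_measurable: "\<Phi> \<in> borel_measurable S"
    and \<Phi>_onorm: "\<forall>x\<in>space S. onorm ((*v) (\<Phi> x)) \<le> 1"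
  shows "(\<integral>\<omega>. g0b n \<Phi> \<theta>s (\<lambda>i. s i \<omega>) \<theta> \<partial>M)
           = ((\<Sum>i<n. integral\<^sup>L (\<mu> i) \<Phi>) /\<^sub>R real n) *v \<theta>
             - (\<Sum>i<n. integral\<^sup>L (\<mu> i) (\<lambda>x. \<Phi> x *v \<theta>s i)) /\<^sub>R real n"
proof -
  have \<Phi>_integrable: "integrable (\<mu> i) \<Phi>" if "i < n" for i
  proof -
    have "integrable M (\<lambda>\<omega>. \<Phi> (s i \<omega>))"
      using \<Phi>_onorm measurable_space[OF s_measurable[OF that]] s_measurable[OF that] \<Phi>_measurable
      by (intro integrable_matrix_onorm_bounded) auto
    then show ?thesis
      using integrable_distr_eq[OF s_measurable[OF that] \<Phi>_measurable] distr[OF that] by simp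
  qed
  have integral_\<mu>: "integral\<^sup>L (\<mu> i) (\<lambda>x. \<Phi> x *v v) = integral\<^sup>L (\<mu> i) \<Phi> *v v"
    and integrable_sample: "integrable M (\<lambda>\<omega>. \<Phi> (s i \<omega>) *v v)"
    and integral_sample: "(\<integral>\<omega>. \<Phi> (s i \<omega>) *v v \<partial>M) = integral\<^sup>L (\<mu> i) \<Phi> *v v"
    if "i < n" for i v
  proof -
    note lin = bounded_linear_matrix_vector_mult_left[of v]
    show "integral\<^sup>L (\<mu> i) (\<lambda>x. \<Phi> x *v v) = integral\<^sup>L (\<mu> i) \<Phi> *v v"
      by (rule integral_bounded_linear[OF lin \<Phi>_integrable[OF that]])
    have \<Phi>v_measurable: "(\<lambda>x. \<Phi> x *v v) \<in> borel_measurable S"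
      by (intro borel_measurable_matrix_vector_mult \<Phi>_measurable borel_measurable_const)
    have "integrable (\<mu> i) (\<lambda>x. \<Phi> x *v v)"
      by (rule integrable_bounded_linear[OF lin \<Phi>_integrable[OF that]])
    then show "integrable M (\<lambda>\<omega>. \<Phi> (s i \<omega>) *v v)"
      using integrable_distr_eq[OF s_measurable[OF that] \<Phi>v_measurable] distr[OF that] by simp
    have "(\<integral>\<omega>. \<Phi> (s i \<omega>) *v v \<partial>M) = integral\<^sup>L (distr M S (s i)) (\<lambda>x. \<Phi> x *v v)"
      by (rule integral_distr[OF s_measurable[OF that] \<Phi>v_measurable, symmetric])
    then show "(\<integral>\<omega>. \<Phi> (s i \<omega>) *v v \<partial>M) = integral\<^sup>L (\<mu> i) \<Phi> *v v"
      using distr[OF that] integral_bounded_linear[OF lin \<Phi>_integrable[OF that]] by simp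
  qed
  have "(\<integral>\<omega>. g0b n \<Phi> \<theta>s (\<lambda>i. s i \<omega>) \<theta> \<partial>M)
          = inverse (real n) *\<^sub>R (\<Sum>i<n. integral\<^sup>L (\<mu> i) \<Phi> *v \<theta> - integral\<^sup>L (\<mu> i) \<Phi> *v \<theta>s i)"
    unfolding g0b_def using integrable_sample
    by (simp add: Bochner_Integration.integral_sum Bochner_Integration.integrable_sum
        integral_sample)
  then show ?thesis
    by (simp add: integral_\<mu> sum_matrix_vector_mult sum_subtractf scaleR_diff_right
        scaleR_matrix_vector_assoc[symmetric] divide_inverse_commute)
qed

lemma (in prob_space) integral_norm_g0b_centred_le:
  assumes "0 < n"
    and indep: "indep_vars (\<lambda>_. S) s {..<n}"
    and \<Phi>_measurable: "\<Phi> \<in> borel_measurable S"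
    and \<Phi>_onorm: "\<forall>x\<in>space S. onorm ((*v) (\<Phi> x)) \<le> 1"
    and bound: "\<And>i. i < n \<Longrightarrow> norm (\<theta> - \<theta>s i) \<le> c"
    and centred: "(\<integral>\<omega>. g0b n \<Phi> \<theta>s (\<lambda>i. s i \<omega>) \<theta> \<partial>M) = 0"
  shows "(\<integral>\<omega>. (norm (g0b n \<Phi> \<theta>s (\<lambda>i. s i \<omega>) \<theta>))\<^sup>2 \<partial>M) \<le> c\<^sup>2 / real n"
proof -
  define Y where "Y i \<omega> = \<Phi> (s i \<omega>) *v (\<theta> - \<theta>s i)" for i \<omega>
  have g0b_Y: "g0b n \<Phi> \<theta>s (\<lambda>i. s i \<omega>) \<theta> = inverse (real n) *\<^sub>R (\<Sum>i<n. Y i \<omega>)" for \<omega>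
    by (simp add: g0b_eq Y_def)
  have s_measurable: "s i \<in> measurable M S" if "i < n" for i
    using indep that by (auto simp: indep_vars_def2)
  have indep_Y: "indep_vars (\<lambda>_. borel) Y {..<n}"
    unfolding Y_def using indep by (rule indep_vars_compose2) (use \<Phi>_measurable in measurable)
  have Y_bound: "norm (Y i \<omega>) \<le> c" if "i < n" "\<omega> \<in> space M" for i \<omega>
    using \<Phi>_onorm measurable_space[OF s_measurable that(2)] that(1) bound[OF that(1)]
      norm_matrix_vector_mult_le order_trans
    unfolding Y_def by blast
  have Y_integrable: "integrable M (Y i)" if "i < n" for i
    using Y_bound that indep_Y
    by (intro integrable_const_bound[OF AE_I2]) (auto simp: indep_vars_def2)
  have "inverse (real n) *\<^sub>R (\<Sum>i<n. \<integral>\<omega>. Y i \<omega> \<partial>M) = 0"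
    using centred Y_integrable by (simp add: g0b_Y Bochner_Integration.integral_sum)
  then have "(\<integral>\<omega>. (norm (\<Sum>i<n. Y i \<omega>))\<^sup>2 \<partial>M) \<le> real n * c\<^sup>2"
    using integral_norm_sum_indep_vars_squared_le[OF _ indep_Y Y_bound] \<open>0 < n\<close> by simp
  then have "real n * (\<integral>\<omega>. (norm (\<Sum>i<n. Y i \<omega>))\<^sup>2 \<partial>M) \<le> real n * (real n * c\<^sup>2)"
    by (rule mult_left_mono) simp
  also have "\<dots> = c\<^sup>2 * (real n)\<^sup>2"
    by (simp add: power2_eq_square)
  finally show ?thesis
    using \<open>0 < n\<close> by (simp add: g0b_Y power_mult_distrib field_simps)
qed

theorem lemma7:
  fixes n :: nat
    and S :: "'s measure"
    and \<mu> :: "nat \<Rightarrow> 's measure"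
    and \<Phi> :: "'s \<Rightarrow> real^'d^'d"
    and \<theta>s :: "nat \<Rightarrow> real^'d"
    and \<theta>cs :: "real^'d"
    and A :: "'s \<Rightarrow> 'm::real_normed_vector"
    and G_A G_x :: real
    and M :: "'w measure"
    and smp :: "nat \<Rightarrow> nat \<Rightarrow> 'w \<Rightarrow> 's"
    and \<alpha> :: "nat \<Rightarrow> real"
    and \<theta>0 :: "real^'d"
    and \<theta>c :: "nat \<Rightarrow> 'w \<Rightarrow> real^'d"
    and t :: nat
  assumes n_pos: "n \<ge> 1"
    and mu_prob: "\<forall>i<n. prob_space (\<mu> i) \<and> sets (\<mu> i) = sets S"
    and Phi_meas: "\<Phi> \<in> borel_measurable S"
    and Phi_bound: "\<forall>s\<in>space S. onorm (\<lambda>x. \<Phi> s *v x) \<le> 1"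
    and Phi_posdef: "posdef_mat ((1/2) *\<^sub>R
          ((\<Sum>i<n. integral\<^sup>L (\<mu> i) \<Phi>) /\<^sub>R real n
           + transpose ((\<Sum>i<n. integral\<^sup>L (\<mu> i) \<Phi>) /\<^sub>R real n)))"
    and theta_c_star: "((\<Sum>i<n. integral\<^sup>L (\<mu> i) \<Phi>) /\<^sub>R real n) *v \<theta>cs
          = (\<Sum>i<n. integral\<^sup>L (\<mu> i) (\<lambda>s. \<Phi> s *v \<theta>s i)) /\<^sub>R real n"
    and A_bound: "\<forall>s\<in>space S. norm (A s) \<le> G_A"
    and G_x_nonneg: "G_x \<ge> 0"
    and M_prob: "prob_space M"
    and smp_meas: "\<forall>t. \<forall>i<n. smp t i \<in> measurable M S"
    and smp_distr: "\<forall>t. \<forall>i<n. distr M S (smp t i) = \<mu> i"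
    and smp_indep: "prob_space.indep_vars M (\<lambda>(t, i). S) (\<lambda>(t, i). smp t i)
                      (UNIV \<times> {..<n})"
    and iter0: "\<forall>\<omega>. \<theta>c 0 \<omega> = \<theta>0"
    and iterSuc: "\<forall>t \<omega>. \<theta>c (Suc t) \<omega> =
          \<theta>c t \<omega> - \<alpha> t *\<^sub>R g0b n \<Phi> \<theta>s (\<lambda>i. smp t i \<omega>) (\<theta>c t \<omega>)"
  shows "(let G_b = Max (insert (norm \<theta>cs) ((\<lambda>i. norm (\<theta>s i)) ` {..<n}));
              \<sigma> = 2 * max (G_A * G_x) G_b
          in (\<integral>\<omega>. (norm (g0b n \<Phi> \<theta>s (\<lambda>i. smp t i \<omega>) (\<theta>c t \<omega>)))\<^sup>2 \<partial>M)
             \<le> 2 * (\<integral>\<omega>. (norm (\<theta>c t \<omega> - \<theta>cs))\<^sup>2 \<partial>M) + 2 * \<sigma>\<^sup>2 / real n)"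
proof -
  interpret M: prob_space M by (rule M_prob)
  define G_b where "G_b = Max (insert (norm \<theta>cs) ((\<lambda>i. norm (\<theta>s i)) ` {..<n}))"
  define \<sigma> where "\<sigma> = 2 * max (G_A * G_x) G_b"
  have "0 < n" using n_pos by simp
  have smp_measurable: "smp t' i \<in> measurable M S" if "i < n" for t' i
    using smp_meas that by blast
  have onorm_samples: "onorm ((*v) (\<Phi> (smp t' i \<omega>))) \<le> 1" if "i < n" "\<omega> \<in> space M" for t' i \<omega>
    using Phi_bound measurable_space[OF smp_measurable that(2)] that(1) by simp
  have indep_t: "M.indep_vars (\<lambda>_. S) (smp t) {..<n}"
    using M.indep_vars_reindex[OF M.indep_vars_subset[OF smp_indep], of "Pair t" "{..<n}"]
    by (auto simp: inj_on_def)
  have \<Phi>_samples_measurable: "(\<lambda>\<omega>. \<Phi> (smp t' i \<omega>)) \<in> borel_measurable M" if "i < n" for t' i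
    using smp_measurable[OF that] Phi_meas by measurable
  have centred: "(\<integral>\<omega>. g0b n \<Phi> \<theta>s (\<lambda>i. smp t i \<omega>) \<theta>cs \<partial>M) = 0"
    using M.integral_g0b[of n "smp t" S \<mu> \<Phi> \<theta>s \<theta>cs] smp_measurable smp_distr Phi_meas
      Phi_bound theta_c_star
    by simp
  \<comment> \<open>Of the constants only \<open>\<sigma> \<ge> 2 G_b\<close> matters.\<close>
  have noise_bound: "norm (\<theta>cs - \<theta>s i) \<le> \<sigma>" if "i < n" for i
  proof -
    have "norm \<theta>cs \<le> G_b" "norm (\<theta>s i) \<le> G_b"
      unfolding G_b_def using that by (auto intro: Max_ge)
    then show ?thesis
      using norm_triangle_ineq4[of \<theta>cs "\<theta>s i"] unfolding \<sigma>_def by linarith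
  qed
  have "(\<integral>\<omega>. (norm (g0b n \<Phi> \<theta>s (\<lambda>i. smp t i \<omega>) (\<theta>c t \<omega>)))\<^sup>2 \<partial>M)
          \<le> 2 * (\<integral>\<omega>. (norm (\<theta>c t \<omega> - \<theta>cs))\<^sup>2 \<partial>M)
            + 2 * (\<integral>\<omega>. (norm (g0b n \<Phi> \<theta>s (\<lambda>i. smp t i \<omega>) \<theta>cs))\<^sup>2 \<partial>M)"
    using \<open>0 < n\<close> \<Phi>_samples_measurable onorm_samples iter0 iterSuc
    by (intro M.integral_norm_g0b_iterate_le) auto
  also have "(\<integral>\<omega>. (norm (g0b n \<Phi> \<theta>s (\<lambda>i. smp t i \<omega>) \<theta>cs))\<^sup>2 \<partial>M) \<le> \<sigma>\<^sup>2 / real n"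
    by (rule M.integral_norm_g0b_centred_le[OF \<open>0 < n\<close> indep_t Phi_meas _ noise_bound centred])
      (use Phi_bound in simp)
  finally show ?thesis
    unfolding Let_def G_b_def[symmetric] \<sigma>_def[symmetric] by simp
qed

end
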